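(* Fix finite alphabets $\mathcal{X},\mathcal{Y},\mathcal{Z}$. The map sending a joint distribution $\mathcal{D}_{X,Y,Z}$ on $\mathcal{X}\times\mathcal{Y}\times\mathcal{Z}$ (an element of the probability simplex in $\mathbb{R}^{|\mathcal{X}|\times|\mathcal{Y}|\times|\mathcal{Z}|}$, with the Euclidean topology) to $\operatorname{Red}(X,Y\to Z)\in\mathbb{R}$ is continuous, where $\operatorname{Red}$ is the redundant information defined below.
   Context: For $(X,Y,Z)$ with joint distribution $\mathcal{D}_{X,Y,Z}$ and each $y\in\mathcal{Y}$ with $\Pr(Y=y)>0$, let $(A_y,B_y,C_y)$ be the random triple on $\mathcal{X}\times\mathcal{Y}\times\mathcal{Z}$ with $\Pr(A_y=x,B_y=y',C_y=z)=0$ if $\Pr(Z=z)=0$ and $\Pr(A_y=x,B_y=y',C_y=z)=\Pr(X=x,Y=y',Z=z)\Pr(Z=z\mid Y=y)/\Pr(Z=z)$ otherwise. The unique information is $\operatorname{Un}(X\to Z\mid Y)=\sum_{y:\Pr(Y=y)>0}\Pr(Y=y)\,I(A_y;C_y)$ and the redundant information is $\operatorname{Red}(X,Y\to Z)=I(X;Z)-\operatorname{Un}(X\to Z\mid Y)$, where $I$ is mutual information. *)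

theory Defs
  imports "HOL-Analysis.Analysis"
begin

definition prob_simplex :: "(real ^ ('x::finite \<times> 'y::finite \<times> 'z::finite)) set" where
  "prob_simplex = {p. (\<forall>i. 0 \<le> p $ i) \<and> (\<Sum>i\<in>UNIV. p $ i) = 1}"

definition mutual_info :: "('a::finite \<times> 'c::finite \<Rightarrow> real) \<Rightarrow> real" where
  "mutual_info r =
     (\<Sum>ac\<in>UNIV. if r ac = 0 then 0
        else r ac * log 2 (r ac / ((\<Sum>c'\<in>UNIV. r (fst ac, c')) * (\<Sum>a'\<in>UNIV. r (a', snd ac)))))"

definition PY :: "real ^ ('x::finite \<times> 'y::finite \<times> 'z::finite) \<Rightarrow> 'y \<Rightarrow> real" where
  "PY p y = (\<Sum>x\<in>UNIV. \<Sum>z\<in>UNIV. p $ (x, y, z))"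

definition PZ :: "real ^ ('x::finite \<times> 'y::finite \<times> 'z::finite) \<Rightarrow> 'z \<Rightarrow> real" where
  "PZ p z = (\<Sum>x\<in>UNIV. \<Sum>y\<in>UNIV. p $ (x, y, z))"

definition PYZ :: "real ^ ('x::finite \<times> 'y::finite \<times> 'z::finite) \<Rightarrow> 'y \<Rightarrow> 'z \<Rightarrow> real" where
  "PYZ p y z = (\<Sum>x\<in>UNIV. p $ (x, y, z))"

definition PXZ :: "real ^ ('x::finite \<times> 'y::finite \<times> 'z::finite) \<Rightarrow> 'x \<times> 'z \<Rightarrow> real" where
  "PXZ p xz = (\<Sum>y\<in>UNIV. p $ (fst xz, y, snd xz))"

text \<open>The law of the triple (A_y, B_y, C_y).\<close>
definition tilt :: "real ^ ('x::finite \<times> 'y::finite \<times> 'z::finite) \<Rightarrow> 'y \<Rightarrow> 'x \<Rightarrow> 'y \<Rightarrow> 'z \<Rightarrow> real" where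
  "tilt p y x y' z = (if PZ p z = 0 then 0
      else p $ (x, y', z) * (PYZ p y z / PY p y) / PZ p z)"

definition tilt_AC :: "real ^ ('x::finite \<times> 'y::finite \<times> 'z::finite) \<Rightarrow> 'y \<Rightarrow> 'x \<times> 'z \<Rightarrow> real" where
  "tilt_AC p y xz = (\<Sum>y'\<in>UNIV. tilt p y (fst xz) y' (snd xz))"

definition Un_info :: "real ^ ('x::finite \<times> 'y::finite \<times> 'z::finite) \<Rightarrow> real" where
  "Un_info p = (\<Sum>y\<in>{y. PY p y > 0}. PY p y * mutual_info (tilt_AC p y))"

definition Red_info :: "real ^ ('x::finite \<times> 'y::finite \<times> 'z::finite) \<Rightarrow> real" where
  "Red_info p = mutual_info (PXZ p) - Un_info p"

end

theory Submission
  imports Defs "HOL-Real_Asymp.Real_Asymp"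
begin

(* The law of (A_y, C_y) is Pr(X = x, Z = z) Pr(Y = y, Z = z) / (Pr(Y = y) Pr(Z = z)).  It is
   continuous wherever Pr(Y = y) > 0: where Pr(Z = z) vanishes so does Pr(X = x, Z = z), and
   the factor Pr(Y = y, Z = z) / Pr(Z = z) stays in [0, 1].  Written as a combination of
   terms t log t of marginals, mutual information is continuous in the joint law and bounded,
   so where Pr(Y = y) vanishes the weight Pr(Y = y) in Un kills it.  Both steps are instances
   of one fact: f g is continuous at a point where f is continuous, g is bounded, and g is
   continuous unless f vanishes there. *)

(* Since ln t = ln |t| for t \<noteq> 0 and ln 0 = 0, t ln t is continuous on all of the reals. *)
lemma isCont_mult_ln: "isCont (\<lambda>t::real. t * ln t) t"
proof (cases "t = 0")
  case True
  have "((\<lambda>t::real. t * ln t) \<longlongrightarrow> 0) (at_right 0)"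
    by real_asymp
  moreover have "((\<lambda>t::real. t * ln t) \<longlongrightarrow> 0) (at_left 0)"
    unfolding filterlim_at_left_to_right by (simp add: ln_minus) real_asymp
  ultimately show ?thesis
    using True by (simp add: isCont_def filterlim_split_at_real)
qed (intro continuous_intros isCont_ln; simp)

lemma continuous_mult_log [continuous_intros]:
  fixes f :: "'a::t2_space \<Rightarrow> real"
  assumes "continuous F f"
  shows "continuous F (\<lambda>x. f x * log b (f x))"
proof -
  have "isCont (\<lambda>t::real. t * ln t * inverse (ln b)) t" for t
    by (intro isCont_mult isCont_mult_ln continuous_const)
  then have cont: "isCont (\<lambda>t::real. t * log b t) (f (netlimit F))"
    by (simp add: log_def divide_inverse mult.assoc)
  have lim: "(f \<longlongrightarrow> f (netlimit F)) F"
    using assms by (simp add: continuous_def)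
  show ?thesis
    unfolding continuous_def by (rule isCont_tendsto_compose[OF cont lim])
qed

lemma abs_mult_log_le:
  assumes "1 < b" "0 \<le> t" "t \<le> 1"
  shows "\<bar>t * log b t\<bar> \<le> 1 / ln b"
proof (cases "t = 0")
  case False
  with assms have t: "0 < t" by simp
  have "- ln t = ln (1 / t)"
    using t by (simp add: ln_div)
  also have "\<dots> \<le> 1 / t - 1"
    using t by (intro ln_le_minus_one) simp
  finally have "- (t * ln t) \<le> 1 - t"
    using t mult_left_mono[of "- ln t" "1 / t - 1" t] by (simp add: field_simps)
  moreover have "t * ln t \<le> 0"
    using t assms by (simp add: mult_nonneg_nonpos)
  ultimately have "\<bar>t * ln t\<bar> \<le> 1"
    using t by linarith
  then show ?thesis
    using assms by (simp add: log_def abs_divide divide_right_mono)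
qed (use assms in simp)

lemma continuous_within_mult_vanishing:
  fixes f g :: "'a::t2_space \<Rightarrow> 'b::real_normed_algebra"
  assumes f: "continuous (at x within S) f"
    and g: "f x \<noteq> 0 \<Longrightarrow> continuous (at x within S) g"
    and bound: "\<And>y. y \<in> S \<Longrightarrow> norm (g y) \<le> B"
  shows "continuous (at x within S) (\<lambda>y. f y * g y)"
proof (cases "f x = 0")
  case True
  have "Zfun f (at x within S)"
    using f True by (simp add: continuous_within tendsto_Zfun_iff)
  moreover have "Bfun g (at x within S)"
    using bound by (intro BfunI[where K = B]) (auto simp: eventually_at_filter)
  ultimately have "Zfun (\<lambda>y. f y * g y) (at x within S)"
    by (rule bounded_bilinear.Zfun_prod_Bfun[OF bounded_bilinear_mult])
  then show ?thesis
    using True by (simp add: continuous_within tendsto_Zfun_iff)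
qed (use f g in \<open>auto intro: continuous_mult\<close>)

lemma sum_UNIV_prod:
  "(\<Sum>i\<in>UNIV. F i) = (\<Sum>a\<in>UNIV. \<Sum>b\<in>UNIV. F (a, b))"
  by (simp add: sum.cartesian_product UNIV_Times_UNIV[symmetric] del: UNIV_Times_UNIV)

lemma mutual_info_eq_entropies:
  fixes r :: "'a::finite \<times> 'c::finite \<Rightarrow> real"
  assumes nonneg: "\<And>ac. 0 \<le> r ac"
  shows "mutual_info r = (\<Sum>ac\<in>UNIV. r ac * log 2 (r ac))
     - (\<Sum>a\<in>UNIV. (\<Sum>c\<in>UNIV. r (a, c)) * log 2 (\<Sum>c\<in>UNIV. r (a, c)))
     - (\<Sum>c\<in>UNIV. (\<Sum>a\<in>UNIV. r (a, c)) * log 2 (\<Sum>a\<in>UNIV. r (a, c)))"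
proof -
  define ra where "ra a = (\<Sum>c\<in>UNIV. r (a, c))" for a
  define rc where "rc c = (\<Sum>a\<in>UNIV. r (a, c))" for c
  have summand_eq: "(if r ac = 0 then 0 else r ac * log 2 (r ac /
        ((\<Sum>c'\<in>UNIV. r (fst ac, c')) * (\<Sum>a'\<in>UNIV. r (a', snd ac)))))
      = r ac * log 2 (r ac) - r ac * log 2 (ra (fst ac)) - r ac * log 2 (rc (snd ac))" for ac
  proof (cases "r ac = 0")
    case False
    obtain a c where ac: "ac = (a, c)"
      by fastforce
    from False have pos: "0 < r (a, c)"
      using nonneg[of ac] ac by simp
    have "r (a, c) \<le> ra a" "r (a, c) \<le> rc c"
      unfolding ra_def rc_def using nonneg by (auto intro: member_le_sum)
    with pos have "log 2 (r (a, c) / (ra a * rc c)) = log 2 (r (a, c)) - log 2 (ra a) - log 2 (rc c)"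
      by (simp add: log_divide log_mult)
    with pos show ?thesis
      by (simp add: ac right_diff_distrib flip: ra_def rc_def)
  qed simp
  have "mutual_info r = (\<Sum>ac\<in>UNIV.
      r ac * log 2 (r ac) - r ac * log 2 (ra (fst ac)) - r ac * log 2 (rc (snd ac)))"
    unfolding mutual_info_def summand_eq ..
  also have "\<dots> = (\<Sum>ac\<in>UNIV. r ac * log 2 (r ac))
      - (\<Sum>a\<in>UNIV. ra a * log 2 (ra a)) - (\<Sum>c\<in>UNIV. rc c * log 2 (rc c))"
  proof -
    have "(\<Sum>ac\<in>UNIV. r ac * log 2 (ra (fst ac))) = (\<Sum>a\<in>UNIV. ra a * log 2 (ra a))"
      by (simp add: sum_UNIV_prod ra_def sum_distrib_right)
    moreover have "(\<Sum>ac\<in>UNIV. r ac * log 2 (rc (snd ac))) = (\<Sum>c\<in>UNIV. rc c * log 2 (rc c))"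
      by (simp add: sum_UNIV_prod rc_def sum_distrib_right sum.swap[of _ "UNIV :: 'a set"])
    ultimately show ?thesis
      by (simp add: sum_subtractf)
  qed
  finally show ?thesis
    by (simp add: ra_def rc_def)
qed

lemma abs_sum_mult_log_le:
  assumes "\<And>i. i \<in> A \<Longrightarrow> 0 \<le> f i \<and> f i \<le> 1"
  shows "\<bar>\<Sum>i\<in>A. f i * log 2 (f i)\<bar> \<le> card A / ln 2"
proof -
  have "\<bar>\<Sum>i\<in>A. f i * log 2 (f i)\<bar> \<le> (\<Sum>i\<in>A. \<bar>f i * log 2 (f i)\<bar>)"
    by (rule sum_abs)
  also have "\<dots> \<le> card A * (1 / ln 2)"
    using assms by (intro sum_bounded_above abs_mult_log_le) auto
  finally show ?thesis
    by simp
qed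

lemma abs_mutual_info_le:
  fixes r :: "'a::finite \<times> 'c::finite \<Rightarrow> real"
  assumes nonneg: "\<And>ac. 0 \<le> r ac" and total: "(\<Sum>ac\<in>UNIV. r ac) \<le> 1"
  shows "\<bar>mutual_info r\<bar> \<le> (CARD('a) * CARD('c) + CARD('a) + CARD('c)) / ln 2"
proof -
  have total': "(\<Sum>a\<in>UNIV. \<Sum>c\<in>UNIV. r (a, c)) \<le> 1"
    using total by (simp add: sum_UNIV_prod)
  have "r ac \<le> 1" for ac
    using member_le_sum[of ac UNIV r] nonneg total by simp
  moreover have "(\<Sum>c\<in>UNIV. r (a, c)) \<le> 1" for a
    using member_le_sum[of a UNIV "\<lambda>a. \<Sum>c\<in>UNIV. r (a, c)"] nonneg total'
    by (simp add: sum_nonneg)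
  moreover have "(\<Sum>a\<in>UNIV. r (a, c)) \<le> 1" for c
    using member_le_sum[of c UNIV "\<lambda>c. \<Sum>a\<in>UNIV. r (a, c)"] nonneg total'
    by (simp add: sum_nonneg sum.swap[of _ "UNIV :: 'c set"])
  ultimately show ?thesis
    unfolding mutual_info_eq_entropies[OF nonneg]
    using abs_sum_mult_log_le[of UNIV r]
      abs_sum_mult_log_le[of UNIV "\<lambda>a. \<Sum>c\<in>UNIV. r (a, c)"]
      abs_sum_mult_log_le[of UNIV "\<lambda>c. \<Sum>a\<in>UNIV. r (a, c)"]
    by (simp add: nonneg sum_nonneg add_divide_distrib)
qed

lemma continuous_mutual_info:
  fixes w :: "'b::metric_space \<Rightarrow> 'a::finite \<times> 'c::finite \<Rightarrow> real"
  assumes "x \<in> S" and nonneg: "\<And>y ac. y \<in> S \<Longrightarrow> 0 \<le> w y ac"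
    and cont: "\<And>ac. continuous (at x within S) (\<lambda>y. w y ac)"
  shows "continuous (at x within S) (\<lambda>y. mutual_info (w y))"
proof (rule continuous_transform_within)
  show "continuous (at x within S) (\<lambda>y. (\<Sum>ac\<in>UNIV. w y ac * log 2 (w y ac))
     - (\<Sum>a\<in>UNIV. (\<Sum>c\<in>UNIV. w y (a, c)) * log 2 (\<Sum>c\<in>UNIV. w y (a, c)))
     - (\<Sum>c\<in>UNIV. (\<Sum>a\<in>UNIV. w y (a, c)) * log 2 (\<Sum>a\<in>UNIV. w y (a, c))))"
    by (intro continuous_intros cont)
qed (use assms in \<open>auto simp: mutual_info_eq_entropies intro: zero_less_one\<close>)

lemma continuous_marginals [continuous_intros]:
  fixes S :: "(real ^ ('x::finite \<times> 'y::finite \<times> 'z::finite)) set"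
  shows "continuous (at q within S) (\<lambda>p. PY p y)" "continuous (at q within S) (\<lambda>p. PZ p z)"
    "continuous (at q within S) (\<lambda>p. PYZ p y z)" "continuous (at q within S) (\<lambda>p. PXZ p xz)"
  unfolding PY_def PZ_def PYZ_def PXZ_def by (intro continuous_intros)+

lemma sum_PXZ_eq_PZ: "(\<Sum>x\<in>UNIV. PXZ p (x, z)) = PZ p z"
  by (simp add: PZ_def PXZ_def)

lemma sum_PYZ_eq_PY: "(\<Sum>z\<in>UNIV. PYZ p y z) = PY p y"
  unfolding PY_def PYZ_def by (rule sum.swap)

lemma sum_PYZ_eq_PZ: "(\<Sum>y\<in>UNIV. PYZ p y z) = PZ p z"
  unfolding PZ_def PYZ_def by (rule sum.swap)

(* Valid even where Pr(Z = z) = 0, because x / 0 = 0. *)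
lemma tilt_AC_eq: "tilt_AC p y xz = PXZ p xz / PY p y * (PYZ p y (snd xz) / PZ p (snd xz))"
  by (cases "PZ p (snd xz) = 0")
    (simp_all add: tilt_AC_def tilt_def PXZ_def sum_distrib_right sum_divide_distrib)

context
  fixes p :: "real ^ ('x::finite \<times> 'y::finite \<times> 'z::finite)"
  assumes p: "p \<in> prob_simplex"
begin

lemma marginals_nonneg: "0 \<le> PY p y" "0 \<le> PZ p z" "0 \<le> PYZ p y z" "0 \<le> PXZ p xz"
  using p unfolding prob_simplex_def PY_def PZ_def PYZ_def PXZ_def by (auto intro!: sum_nonneg)

lemma PXZ_le_PZ: "PXZ p (x, z) \<le> PZ p z"
  unfolding sum_PXZ_eq_PZ[symmetric] by (rule member_le_sum) (auto intro: marginals_nonneg)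

lemma PYZ_le_PZ: "PYZ p y z \<le> PZ p z"
  unfolding sum_PYZ_eq_PZ[symmetric] by (rule member_le_sum) (auto intro: marginals_nonneg)

lemma tilt_AC_nonneg: "0 \<le> tilt_AC p y xz"
  unfolding tilt_AC_eq by (intro mult_nonneg_nonneg divide_nonneg_nonneg marginals_nonneg)

lemma sum_tilt_AC_le_1: "(\<Sum>xz\<in>UNIV. tilt_AC p y xz) \<le> 1"
proof -
  have "(\<Sum>x\<in>UNIV. tilt_AC p y (x, z)) = PYZ p y z / PY p y * ((\<Sum>x\<in>UNIV. PXZ p (x, z)) / PZ p z)"
    for z
    by (simp add: tilt_AC_eq sum_divide_distrib sum_distrib_left sum_distrib_right mult_ac)
  then have "(\<Sum>xz\<in>UNIV. tilt_AC p y xz) = (\<Sum>z\<in>UNIV. PYZ p y z / PY p y * (PZ p z / PZ p z))"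
    by (subst sum_UNIV_prod, subst sum.swap) (simp add: sum_PXZ_eq_PZ)
  also have "\<dots> \<le> (\<Sum>z\<in>UNIV. PYZ p y z / PY p y)"
    by (intro sum_mono mult_left_le divide_nonneg_nonneg marginals_nonneg) simp
  also have "\<dots> = PY p y / PY p y"
    by (simp add: sum_PYZ_eq_PY flip: sum_divide_distrib)
  also have "\<dots> \<le> 1"
    by simp
  finally show ?thesis .
qed

lemma Un_info_eq_sum: "Un_info p = (\<Sum>y\<in>UNIV. PY p y * mutual_info (tilt_AC p y))"
  unfolding Un_info_def
  by (rule sum.mono_neutral_left) (use marginals_nonneg in \<open>auto simp: order.order_iff_strict\<close>)

end

lemma continuous_tilt_AC:
  assumes "p \<in> prob_simplex" "PY p y \<noteq> 0"
  shows "continuous (at p within prob_simplex) (\<lambda>q. tilt_AC q y (x, z))"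
  unfolding tilt_AC_eq snd_conv
proof (rule continuous_within_mult_vanishing)
  show "continuous (at p within prob_simplex) (\<lambda>q. PXZ q (x, z) / PY q y)"
    using assms(2) by (intro continuous_intros)
  show "continuous (at p within prob_simplex) (\<lambda>q. PYZ q y z / PZ q z)"
    if "PXZ p (x, z) / PY p y \<noteq> 0"
  proof -
    have "PZ p z \<noteq> 0"
      using that PXZ_le_PZ[OF assms(1), of x z] marginals_nonneg(4)[OF assms(1), of "(x, z)"] by auto
    then show ?thesis
      by (intro continuous_intros)
  qed
  show "norm (PYZ q y z / PZ q z) \<le> 1" if "q \<in> prob_simplex" for q
    using marginals_nonneg[OF that] PYZ_le_PZ[OF that]
    by (cases "PZ q z = 0") (auto simp: divide_le_eq_1 less_le)
qed

lemma continuous_on_weighted_mutual_info_tilt: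
  fixes y :: "'y::finite"
  shows "continuous_on (prob_simplex :: (real ^ ('x::finite \<times> 'y \<times> 'z::finite)) set)
    (\<lambda>p. PY p y * mutual_info (tilt_AC p y))"
  unfolding continuous_on_eq_continuous_within
proof
  fix p :: "real ^ ('x \<times> 'y \<times> 'z)"
  assume p: "p \<in> prob_simplex"
  show "continuous (at p within prob_simplex) (\<lambda>p. PY p y * mutual_info (tilt_AC p y))"
  proof (rule continuous_within_mult_vanishing)
    show "continuous (at p within prob_simplex) (\<lambda>q. PY q y)"
      by (intro continuous_intros)
    show "continuous (at p within prob_simplex) (\<lambda>q. mutual_info (tilt_AC q y))"
      if "PY p y \<noteq> 0"
      using p that by (intro continuous_mutual_info) (auto intro: tilt_AC_nonneg continuous_tilt_AC)
    show "norm (mutual_info (tilt_AC q y)) \<le> (CARD('x) * CARD('z) + CARD('x) + CARD('z)) / ln 2"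
      if "q \<in> prob_simplex" for q :: "real ^ ('x \<times> 'y \<times> 'z)"
      unfolding real_norm_def using that by (intro abs_mutual_info_le tilt_AC_nonneg sum_tilt_AC_le_1)
  qed
qed

theorem lemma9:
  shows "continuous_on (prob_simplex :: (real ^ ('x::finite \<times> 'y::finite \<times> 'z::finite)) set) Red_info"
proof -
  let ?S = "prob_simplex :: (real ^ ('x \<times> 'y \<times> 'z)) set"
  have "continuous_on ?S (\<lambda>p. mutual_info (PXZ p))"
    unfolding continuous_on_eq_continuous_within
    by (auto intro: continuous_mutual_info marginals_nonneg continuous_intros)
  then have "continuous_on ?S (\<lambda>p. mutual_info (PXZ p) - (\<Sum>y\<in>UNIV. PY p y * mutual_info (tilt_AC p y)))"
    by (intro continuous_intros continuous_on_weighted_mutual_info_tilt)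
  then show ?thesis
    by (rule continuous_on_eq) (simp add: Red_info_def Un_info_eq_sum)
qed

end
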